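(* Let $F\in L^1(\mathbb T^d;\mathbb H^{m\times n})$, written $F(\boldsymbol\theta)=Z(\boldsymbol\theta)+W(\boldsymbol\theta)\mathbf j$ with $Z,W:\mathbb T^d\to\mathbb C_{\mathbf i}^{m\times n}$, and fix an ordered partition $S_L\dot\cup S_R=\{1,\dots,d\}$. For $\boldsymbol m\in\mathbb Z^d$ define $\tilde{\boldsymbol m}$ by $\tilde m_j=m_j$ for $j\in S_L$ and $\tilde m_j=-m_j$ for $j\in S_R$. Then for every $\boldsymbol m\in\mathbb Z^d$, $$\Phi\bigl(\widehat F^{(S_L,S_R)}(\boldsymbol m)\bigr)=\begin{bmatrix}\widehat Z(\boldsymbol m)&\widehat W(\tilde{\boldsymbol m})\\ -\widehat{\overline W}(-\tilde{\boldsymbol m})&\widehat{\overline Z}(-\boldsymbol m)\end{bmatrix},$$ where hats on the right denote ordinary complex matrix Fourier coefficients $\widehat G(\boldsymbol k)=(2\pi)^{-d}\int_{\mathbb T^d}G(\boldsymbol\theta)e^{-\mathbf i\langle\boldsymbol k,\boldsymbol\theta\rangle}d\boldsymbol\theta$.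
   Context: $\mathbb H$ is the quaternion algebra with units $\mathbf i,\mathbf j,\mathbf k=\mathbf i\mathbf j$; $\mathbb C_{\mathbf i}=\operatorname{span}_{\mathbb R}\{1,\mathbf i\}\cong\mathbb C$; bar is complex conjugation on $\mathbb C_{\mathbf i}$. For $A=Z+W\mathbf j$ ($Z,W\in\mathbb C_{\mathbf i}^{m\times n}$), $\Phi(A)=\begin{bmatrix}Z&W\\-\overline W&\overline Z\end{bmatrix}$. $\mathbb T^d=[-\pi,\pi)^d$ with Lebesgue measure. For $S\subseteq\{1,\dots,d\}$, $\langle\boldsymbol m,\boldsymbol\theta\rangle_S=\sum_{j\in S}m_j\theta_j$. The sandwich Fourier coefficient is $\widehat F^{(S_L,S_R)}(\boldsymbol m)=(2\pi)^{-d}\int_{\mathbb T^d}e^{-\mathbf i\langle\boldsymbol m,\boldsymbol\theta\rangle_{S_L}}F(\boldsymbol\theta)e^{-\mathbf i\langle\boldsymbol m,\boldsymbol\theta\rangle_{S_R}}d\boldsymbol\theta\in\mathbb H^{m\times n}$. *)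

theory Defs
  imports "HOL-Analysis.Analysis"
begin

datatype quat = Quat (q_re: real) (q_i: real) (q_j: real) (q_k: real)

instantiation quat :: "{zero, one, plus, minus, uminus, times}"
begin
definition "0 = Quat 0 0 0 0"
definition "1 = Quat 1 0 0 0"
definition "p + q = Quat (q_re p + q_re q) (q_i p + q_i q) (q_j p + q_j q) (q_k p + q_k q)"
definition "p - q = Quat (q_re p - q_re q) (q_i p - q_i q) (q_j p - q_j q) (q_k p - q_k q)"
definition "- q = Quat (- q_re q) (- q_i q) (- q_j q) (- q_k q)"
text \<open>Hamilton product, with i j = k.\<close>
definition "p * q = Quat
   (q_re p * q_re q - q_i p * q_i q - q_j p * q_j q - q_k p * q_k q)
   (q_re p * q_i q + q_i p * q_re q + q_j p * q_k q - q_k p * q_j q)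
   (q_re p * q_j q - q_i p * q_k q + q_j p * q_re q + q_k p * q_i q)
   (q_re p * q_k q + q_i p * q_j q - q_j p * q_i q + q_k p * q_re q)"
instance ..
end

definition qJ :: quat where "qJ = Quat 0 0 1 0"
definition cq :: "complex \<Rightarrow> quat" where "cq z = Quat (Re z) (Im z) 0 0"

text \<open>Components \<open>Z\<close>, \<open>W\<close> of \<open>q = Z + W j\<close>.\<close>
definition qZ :: "quat \<Rightarrow> complex" where "qZ q = Complex (q_re q) (q_i q)"
definition qW :: "quat \<Rightarrow> complex" where "qW q = Complex (q_j q) (q_k q)"

text \<open>\<open>\<bbbT>\<^sup>d = [-\<pi>,\<pi>)\<^sup>d\<close>, coordinates indexed by the finite type \<open>'d\<close> (d = CARD('d)).\<close>
definition torus :: "(real^'d::finite) set" where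
  "torus = {\<theta>. \<forall>j. - pi \<le> \<theta>$j \<and> \<theta>$j < pi}"

definition ipS :: "'d::finite set \<Rightarrow> int^'d \<Rightarrow> real^'d \<Rightarrow> real" where
  "ipS S m \<theta> = (\<Sum>j\<in>S. of_int (m$j) * \<theta>$j)"

definition qintegral :: "(real^'d::finite \<Rightarrow> quat) \<Rightarrow> quat" where
  "qintegral f = Quat
     (integral\<^sup>L (lebesgue_on torus) (\<lambda>\<theta>. q_re (f \<theta>)))
     (integral\<^sup>L (lebesgue_on torus) (\<lambda>\<theta>. q_i (f \<theta>)))
     (integral\<^sup>L (lebesgue_on torus) (\<lambda>\<theta>. q_j (f \<theta>)))
     (integral\<^sup>L (lebesgue_on torus) (\<lambda>\<theta>. q_k (f \<theta>)))"

definition qscale :: "real \<Rightarrow> quat \<Rightarrow> quat" where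
  "qscale r q = Quat (r * q_re q) (r * q_i q) (r * q_j q) (r * q_k q)"

definition qL1 :: "(real^'d::finite \<Rightarrow> quat^'n::finite^'m::finite) \<Rightarrow> bool" where
  "qL1 F \<longleftrightarrow> (\<forall>a b. integrable (lebesgue_on torus) (\<lambda>\<theta>. q_re (F \<theta> $ a $ b))
                   \<and> integrable (lebesgue_on torus) (\<lambda>\<theta>. q_i (F \<theta> $ a $ b))
                   \<and> integrable (lebesgue_on torus) (\<lambda>\<theta>. q_j (F \<theta> $ a $ b))
                   \<and> integrable (lebesgue_on torus) (\<lambda>\<theta>. q_k (F \<theta> $ a $ b)))"

definition sandwich_fc ::
  "(real^'d::finite \<Rightarrow> quat^'n::finite^'m::finite) \<Rightarrow> 'd set \<Rightarrow> 'd set \<Rightarrow> int^'d \<Rightarrow> quat^'n^'m" where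
  "sandwich_fc F SL SR m = (\<chi> a b. qscale ((2 * pi) powr (- real CARD('d)))
      (qintegral (\<lambda>\<theta>. cq (exp (- \<i> * of_real (ipS SL m \<theta>))) * (F \<theta> $ a $ b)
                        * cq (exp (- \<i> * of_real (ipS SR m \<theta>))))))"

definition cfc :: "(real^'d::finite \<Rightarrow> complex^'n::finite^'m::finite) \<Rightarrow> int^'d \<Rightarrow> complex^'n^'m" where
  "cfc G k = (\<chi> a b. of_real ((2 * pi) powr (- real CARD('d))) *
      integral\<^sup>L (lebesgue_on torus) (\<lambda>\<theta>. G \<theta> $ a $ b * exp (- \<i> * of_real (ipS UNIV k \<theta>))))"

definition cnj_mat :: "complex^'n::finite^'m::finite \<Rightarrow> complex^'n^'m" where
  "cnj_mat A = (\<chi> a b. cnj (A $ a $ b))"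

definition block2 ::
  "complex^'n::finite^'m::finite \<Rightarrow> complex^'n^'m \<Rightarrow> complex^'n^'m \<Rightarrow> complex^'n^'m
   \<Rightarrow> complex^('n + 'n)^('m + 'm)" where
  "block2 A B C D = (\<chi> r c. case r of
       Inl a \<Rightarrow> (case c of Inl b \<Rightarrow> A $ a $ b | Inr b \<Rightarrow> B $ a $ b)
     | Inr a \<Rightarrow> (case c of Inl b \<Rightarrow> C $ a $ b | Inr b \<Rightarrow> D $ a $ b))"

definition Phi :: "quat^'n::finite^'m::finite \<Rightarrow> complex^('n + 'n)^('m + 'm)" where
  "Phi A = block2 (\<chi> a b. qZ (A $ a $ b)) (\<chi> a b. qW (A $ a $ b))
                  (\<chi> a b. - cnj (qW (A $ a $ b))) (\<chi> a b. cnj (qZ (A $ a $ b)))"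

end

theory Submission
  imports Defs
begin

text \<open>Write \<open>e(t) = exp (-i t)\<close>. Since \<open>j z = conj z j\<close> for \<open>z \<in> \<complex>\<^sub>i\<close>, the sandwich
  \<open>e(A) (z + w j) e(B)\<close> equals \<open>z e(A + B) + w e(A - B) j\<close>. For \<open>A = \<langle>m,\<theta>\<rangle>_S_L\<close> and
  \<open>B = \<langle>m,\<theta>\<rangle>_S_R\<close> the two phases are \<open>\<langle>m,\<theta>\<rangle>\<close> and \<open>\<langle>m~,\<theta>\<rangle>\<close>, so integrating componentwise
  turns the sandwich coefficient into \<open>Z^(m) + W^(m~) j\<close>. Applying \<open>\<Phi>\<close> and using
  \<open>conj (G^(k)) = (conj G)^(-k)\<close> gives the block form.\<close>

lemma cq_plus_cq_qJ: "cq z + cq w * qJ = Quat (Re z) (Im z) (Re w) (Im w)"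
  by (simp add: cq_def qJ_def times_quat_def plus_quat_def)

lemma qZ_cq_plus_cq_qJ [simp]: "qZ (cq z + cq w * qJ) = z"
  by (simp add: cq_plus_cq_qJ qZ_def complex_eq_iff)

lemma qW_cq_plus_cq_qJ [simp]: "qW (cq z + cq w * qJ) = w"
  by (simp add: cq_plus_cq_qJ qW_def complex_eq_iff)

lemma qscale_cq_plus_cq_qJ:
  "qscale r (cq z + cq w * qJ) = cq (of_real r * z) + cq (of_real r * w) * qJ"
  by (simp add: cq_plus_cq_qJ qscale_def)

lemma exp_minus_i_of_real: "exp (- \<i> * of_real t) = Complex (cos t) (- sin t)"
  by (simp add: complex_eq_iff exp_Euler[symmetric] Re_exp Im_exp)

lemma cq_exp_sandwich:
  "cq (exp (- \<i> * of_real A)) * (cq z + cq w * qJ) * cq (exp (- \<i> * of_real B)) =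
   cq (z * exp (- \<i> * of_real (A + B))) + cq (w * exp (- \<i> * of_real (A - B))) * qJ"
  unfolding cq_plus_cq_qJ exp_minus_i_of_real
  by (simp add: cq_def times_quat_def cos_add sin_add cos_diff sin_diff algebra_simps)

lemma integrable_complex_iff:
  fixes f :: "'a \<Rightarrow> complex"
  shows "integrable M f \<longleftrightarrow> integrable M (\<lambda>x. Re (f x)) \<and> integrable M (\<lambda>x. Im (f x))"
proof (intro iffI)
  assume "integrable M (\<lambda>x. Re (f x)) \<and> integrable M (\<lambda>x. Im (f x))"
  then have "integrable M (\<lambda>x. of_real (Re (f x)) + \<i> * of_real (Im (f x)))"
    by auto
  then show "integrable M f"
    by (simp only: complex_eq[symmetric])
qed auto

lemma qintegral_cq_plus_cq_qJ:
  assumes "integrable (lebesgue_on torus) f" "integrable (lebesgue_on torus) g"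
  shows "qintegral (\<lambda>\<theta>. cq (f \<theta>) + cq (g \<theta>) * qJ) =
         cq (integral\<^sup>L (lebesgue_on torus) f) + cq (integral\<^sup>L (lebesgue_on torus) g) * qJ"
  using assms by (simp add: qintegral_def cq_plus_cq_qJ)

lemma qL1_integrable_components:
  assumes "qL1 F" and decomp: "\<And>\<theta>. F \<theta> $ a $ b = cq (z \<theta>) + cq (w \<theta>) * qJ"
  shows "integrable (lebesgue_on torus) z" "integrable (lebesgue_on torus) w"
proof -
  have "integrable (lebesgue_on torus) (\<lambda>\<theta>. q_re (F \<theta> $ a $ b))"
    "integrable (lebesgue_on torus) (\<lambda>\<theta>. q_i (F \<theta> $ a $ b))"
    "integrable (lebesgue_on torus) (\<lambda>\<theta>. q_j (F \<theta> $ a $ b))"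
    "integrable (lebesgue_on torus) (\<lambda>\<theta>. q_k (F \<theta> $ a $ b))"
    using assms(1) unfolding qL1_def by blast+
  then show "integrable (lebesgue_on torus) z" "integrable (lebesgue_on torus) w"
    unfolding decomp cq_plus_cq_qJ integrable_complex_iff by simp_all
qed

lemma borel_measurable_ipS: "ipS S k \<in> borel_measurable (lebesgue_on A)"
proof -
  have [measurable]: "(\<lambda>x. x $ j) \<in> borel_measurable (lebesgue_on A)" for j
    by (intro measurable_restrict_space1 measurable_completion) simp
  show ?thesis
    unfolding ipS_def by measurable
qed

lemma integrable_mult_exp_phase:
  fixes f :: "'a \<Rightarrow> complex"
  assumes "integrable M f" "\<phi> \<in> borel_measurable M"
  shows "integrable M (\<lambda>x. f x * exp (- \<i> * of_real (\<phi> x)))"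
proof (rule Bochner_Integration.integrable_bound[OF assms(1)])
  show "(\<lambda>x. f x * exp (- \<i> * of_real (\<phi> x))) \<in> borel_measurable M"
    using assms by measurable
  show "AE x in M. norm (f x * exp (- \<i> * of_real (\<phi> x))) \<le> norm (f x)"
    by (simp add: norm_mult norm_exp_i_times flip: of_real_minus)
qed

lemma ipS_union: "A \<inter> B = {} \<Longrightarrow> ipS (A \<union> B) k \<theta> = ipS A k \<theta> + ipS B k \<theta>"
  unfolding ipS_def by (simp add: sum.union_disjoint)

lemma ipS_cong: "(\<And>j. j \<in> S \<Longrightarrow> k $ j = k' $ j) \<Longrightarrow> ipS S k \<theta> = ipS S k' \<theta>"
  unfolding ipS_def by (intro sum.cong) auto

lemma ipS_uminus: "ipS S (- k) \<theta> = - ipS S k \<theta>"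
  unfolding ipS_def by (simp add: sum_negf)

lemma ipS_reflect:
  assumes "SL \<inter> SR = {}" "SL \<union> SR = UNIV"
  shows "ipS UNIV (\<chi> j. if j \<in> SL then m $ j else - (m $ j)) \<theta> = ipS SL m \<theta> - ipS SR m \<theta>"
proof -
  let ?mt = "\<chi> j. if j \<in> SL then m $ j else - (m $ j)"
  have "ipS SL ?mt \<theta> = ipS SL m \<theta>"
    by (rule ipS_cong) simp
  moreover have "ipS SR ?mt \<theta> = ipS SR (- m) \<theta>"
    using assms(1) by (intro ipS_cong) auto
  ultimately show ?thesis
    using ipS_union[OF assms(1), of ?mt \<theta>] by (simp add: assms(2) ipS_uminus)
qed

lemma cnj_mult_exp_minus_i_of_real:
  "cnj z * exp (- \<i> * of_real (- t)) = cnj (z * exp (- \<i> * of_real t))"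
  unfolding exp_minus_i_of_real by (simp add: complex_eq_iff)

lemma cfc_cnj_mat: "cfc (\<lambda>\<theta>. cnj_mat (G \<theta>)) (- k) = cnj_mat (cfc G k)"
  unfolding cfc_def cnj_mat_def
  by (simp only: vec_lambda_beta ipS_uminus cnj_mult_exp_minus_i_of_real
      Bochner_Integration.integral_cnj) simp

lemma Phi_cq_plus_cq_qJ:
  "Phi (\<chi> a b. cq (A $ a $ b) + cq (B $ a $ b) * qJ) = block2 A B (- cnj_mat B) (cnj_mat A)"
  by (simp add: Phi_def block2_def cnj_mat_def vec_eq_iff split: sum.split)

lemma sandwich_fc_decomp:
  fixes F :: "real^'d::finite \<Rightarrow> quat^'n::finite^'m::finite"
  assumes L1: "qL1 F"
    and decomp: "\<And>\<theta> a b. F \<theta> $ a $ b = cq (Z \<theta> $ a $ b) + cq (W \<theta> $ a $ b) * qJ"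
    and part: "SL \<inter> SR = {}" "SL \<union> SR = UNIV"
  shows "sandwich_fc F SL SR m =
    (\<chi> a b. cq (cfc Z m $ a $ b) + cq (cfc W (\<chi> j. if j \<in> SL then m $ j else - (m $ j)) $ a $ b) * qJ)"
proof -
  let ?M = "lebesgue_on (torus :: (real^'d) set)"
  let ?mt = "\<chi> j. if j \<in> SL then m $ j else - (m $ j)"
  let ?e = "\<lambda>k \<theta>. exp (- \<i> * of_real (ipS UNIV k \<theta>))"
  have phase: "cq (exp (- \<i> * of_real (ipS SL m \<theta>))) * (F \<theta> $ a $ b) * cq (exp (- \<i> * of_real (ipS SR m \<theta>)))
      = cq (Z \<theta> $ a $ b * ?e m \<theta>) + cq (W \<theta> $ a $ b * ?e ?mt \<theta>) * qJ" for \<theta> a b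
  proof -
    have "ipS UNIV m \<theta> = ipS SL m \<theta> + ipS SR m \<theta>"
      using ipS_union[OF part(1)] part(2) by metis
    then show ?thesis
      by (simp only: decomp cq_exp_sandwich ipS_reflect[OF part])
  qed
  have "integrable ?M (\<lambda>\<theta>. Z \<theta> $ a $ b * ?e k \<theta>)" "integrable ?M (\<lambda>\<theta>. W \<theta> $ a $ b * ?e k \<theta>)" for a b k
    by (intro integrable_mult_exp_phase borel_measurable_ipS qL1_integrable_components[OF L1 decomp])+
  then show ?thesis
    unfolding sandwich_fc_def phase by (simp add: qintegral_cq_plus_cq_qJ qscale_cq_plus_cq_qJ cfc_def)
qed

theorem mainTheorem3:
  fixes F :: "real^'d::finite \<Rightarrow> quat^'n::finite^'m::finite"
    and Z W :: "real^'d \<Rightarrow> complex^'n^'m"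
    and SL SR :: "'d set"
    and m :: "int^'d"
  assumes L1: "qL1 F"
    and decomp: "\<And>\<theta> a b. F \<theta> $ a $ b = cq (Z \<theta> $ a $ b) + cq (W \<theta> $ a $ b) * qJ"
    and part: "SL \<inter> SR = {}" "SL \<union> SR = UNIV"
  shows "let mt = (\<chi> j. if j \<in> SL then m $ j else - (m $ j)) in
         Phi (sandwich_fc F SL SR m) =
           block2 (cfc Z m) (cfc W mt)
                  (- cfc (\<lambda>\<theta>. cnj_mat (W \<theta>)) (- mt)) (cfc (\<lambda>\<theta>. cnj_mat (Z \<theta>)) (- m))"
  unfolding Let_def sandwich_fc_decomp[OF L1 decomp part] Phi_cq_plus_cq_qJ cfc_cnj_mat ..

end
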